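(* Let $T$ be a forest and $F$ a graph (both without roots), and let $\phi:V(T)\to V(F)$ be a local isomorphism. Then there exists a set $V\subseteq V(T)$ such that $\phi$ restricted to $V$ is a bijection onto $V(F)$ and the map $\phi^*$ restricted to $E_V(T)$ is injective.
   Context: A map $\phi:V(T)\to V(F)$ is a local isomorphism if it is surjective, maps every edge of $T$ to an edge of $F$ (i.e. $uv\in E(T)$ implies $\phi(u)\phi(v)\in E(F)$), and maps any two distinct edges of $T$ sharing a vertex to distinct edges of $F$. The induced map $\phi^*:E(T)\to E(F)$ sends $uv$ to $\phi(u)\phi(v)$. For $S\subseteq V(T)$, $E_S(T)$ is the set of edges of $T$ containing at least one vertex of $S$. *)

theory Defs
  imports Main
begin

definition simple_graph :: "'a set \<Rightarrow> 'a set set \<Rightarrow> bool" where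
  "simple_graph V E \<longleftrightarrow> finite V \<and>
     (\<forall>e\<in>E. \<exists>u v. e = {u, v} \<and> u \<noteq> v \<and> u \<in> V \<and> v \<in> V)"

definition forest :: "'a set \<Rightarrow> 'a set set \<Rightarrow> bool" where
  "forest V E \<longleftrightarrow> simple_graph V E \<and>
     \<not> (\<exists>cs. length cs \<ge> 3 \<and> distinct cs \<and> set cs \<subseteq> V \<and>
            (\<forall>i<length cs. {cs ! i, cs ! ((i + 1) mod length cs)} \<in> E))"

definition edge_map :: "('a \<Rightarrow> 'b) \<Rightarrow> 'a set \<Rightarrow> 'b set" where
  "edge_map \<phi> e = \<phi> ` e"

definition local_iso ::
  "('a \<Rightarrow> 'b) \<Rightarrow> 'a set \<Rightarrow> 'a set set \<Rightarrow> 'b set \<Rightarrow> 'b set set \<Rightarrow> bool" where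
  "local_iso \<phi> VT ET VF EF \<longleftrightarrow>
     \<phi> ` VT = VF \<and>
     (\<forall>u v. {u, v} \<in> ET \<longrightarrow> {\<phi> u, \<phi> v} \<in> EF) \<and>
     (\<forall>e1\<in>ET. \<forall>e2\<in>ET. e1 \<noteq> e2 \<and> e1 \<inter> e2 \<noteq> {} \<longrightarrow> edge_map \<phi> e1 \<noteq> edge_map \<phi> e2)"

definition edges_at :: "'a set set \<Rightarrow> 'a set \<Rightarrow> 'a set set" where
  "edges_at ET S = {e \<in> ET. e \<inter> S \<noteq> {}}"

end

theory Submission imports Defs begin

(*
  Induction on the number of vertices of the forest T. Delete a leaf l (the first
  vertex of a longest path) and take a transversal S of the fibres of phi on T - l
  with phi^* injective on E_S(T - l). If phi l is a new value, add l to S: no edge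
  avoiding l has phi l in its image. If the unique edge lw at l has w in S, let l
  replace the vertex t of S with phi t = phi l: colliding edges are disjoint by
  local injectivity, so an edge meeting S - t whose image is {phi l, phi w} would
  contain a vertex of S other than t and w with value phi t or phi w. Otherwise no
  edge at l meets S, and S itself works.
*)

definition locally_injective :: "('a \<Rightarrow> 'b) \<Rightarrow> 'a set set \<Rightarrow> bool" where
  "locally_injective \<phi> E \<longleftrightarrow>
     (\<forall>e1\<in>E. \<forall>e2\<in>E. e1 \<noteq> e2 \<and> e1 \<inter> e2 \<noteq> {} \<longrightarrow> edge_map \<phi> e1 \<noteq> edge_map \<phi> e2)"

lemma locally_injective_subset:
  "locally_injective \<phi> E \<Longrightarrow> E' \<subseteq> E \<Longrightarrow> locally_injective \<phi> E'"
  unfolding locally_injective_def by blast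

lemma locally_injective_collision_disjoint:
  assumes "locally_injective \<phi> E" "e1 \<in> E" "e2 \<in> E" "e1 \<noteq> e2"
    and "edge_map \<phi> e1 = edge_map \<phi> e2"
  shows "e1 \<inter> e2 = {}"
  using assms unfolding locally_injective_def by blast

lemma simple_graph_edgeE:
  assumes "simple_graph V E" "e \<in> E"
  obtains u v where "e = {u, v}" "u \<noteq> v" "u \<in> V" "v \<in> V"
  using assms unfolding simple_graph_def by blast

lemma simple_graph_edge_subset: "simple_graph V E \<Longrightarrow> e \<in> E \<Longrightarrow> e \<subseteq> V"
  by (auto elim: simple_graph_edgeE)

lemma simple_graph_edge_through:
  assumes "simple_graph V E" "e \<in> E" "x \<in> e"
  obtains y where "e = {x, y}" "y \<noteq> x" "y \<in> V"
  using assms by (elim simple_graph_edgeE) (auto simp: insert_commute)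

lemma forest_subgraph:
  assumes "forest V E" "V' \<subseteq> V" "E' \<subseteq> E" "\<And>e. e \<in> E' \<Longrightarrow> e \<subseteq> V'"
  shows "forest V' E'"
proof -
  have "simple_graph V' E'"
    unfolding simple_graph_def
  proof (intro conjI ballI)
    show "finite V'"
      using assms(1,2) finite_subset unfolding forest_def simple_graph_def by blast
    fix e assume "e \<in> E'"
    then obtain u v where "e = {u, v}" "u \<noteq> v"
      using assms(1,3) unfolding forest_def by (meson simple_graph_edgeE subsetD)
    then show "\<exists>u v. e = {u, v} \<and> u \<noteq> v \<and> u \<in> V' \<and> v \<in> V'"
      using assms(4) \<open>e \<in> E'\<close> by blast
  qed
  then show ?thesis
    using assms(1-3) unfolding forest_def by (meson order_trans subsetD)
qed

lemma forest_delete_vertex: "forest V E \<Longrightarrow> forest (V - {l}) {e \<in> E. l \<notin> e}"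
  by (rule forest_subgraph) (auto simp: forest_def dest: simple_graph_edge_subset)

definition path_in :: "'a set \<Rightarrow> 'a set set \<Rightarrow> 'a list \<Rightarrow> bool" where
  "path_in V E ps \<longleftrightarrow> distinct ps \<and> set ps \<subseteq> V \<and>
     (\<forall>i. Suc i < length ps \<longrightarrow> {ps ! i, ps ! Suc i} \<in> E)"

lemma path_in_Cons:
  "path_in V E (x # ps) \<longleftrightarrow> path_in V E ps \<and> x \<notin> set ps \<and> x \<in> V \<and>
     (ps \<noteq> [] \<longrightarrow> {x, hd ps} \<in> E)"
  unfolding path_in_def
  by (auto simp: hd_conv_nth nth_Cons split: nat.splits)

lemma forest_path_no_chord:
  assumes "forest V E" "path_in V E ps" "2 \<le> j" "j < length ps"
  shows "{ps ! 0, ps ! j} \<notin> E"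
proof
  assume chord: "{ps ! 0, ps ! j} \<in> E"
  define cs where "cs = take (Suc j) ps"
  have len: "length cs = Suc j"
    using assms(4) by (simp add: cs_def)
  have "{cs ! i, cs ! ((i + 1) mod length cs)} \<in> E" if "i < length cs" for i
  proof (cases "i < j")
    case True
    then show ?thesis
      using assms(2,4) len unfolding path_in_def cs_def by simp
  next
    case False
    then have "i = j" using that len by simp
    then show ?thesis
      using chord len by (simp add: cs_def insert_commute)
  qed
  moreover have "length cs \<ge> 3" "distinct cs" "set cs \<subseteq> V"
    using assms(2,3) len set_take_subset[of "Suc j" ps]
    unfolding path_in_def cs_def by auto
  ultimately show False
    using assms(1) unfolding forest_def by blast
qed

lemma forest_has_leaf:
  assumes forest: "forest V E" and "V \<noteq> {}"
  obtains l where "l \<in> V" "\<And>y z. {l, y} \<in> E \<Longrightarrow> {l, z} \<in> E \<Longrightarrow> y = z"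
proof -
  have sg: "simple_graph V E"
    using forest unfolding forest_def by blast
  obtain v where "v \<in> V"
    using \<open>V \<noteq> {}\<close> by blast
  then have "path_in V E [v]"
    unfolding path_in_def by simp
  moreover have "length ps < Suc (card V)" if "path_in V E ps" for ps
    using that sg distinct_card card_mono[of V "set ps"]
    unfolding path_in_def simple_graph_def by fastforce
  ultimately obtain ps where ps: "path_in V E ps"
    and longest: "\<And>qs. path_in V E qs \<Longrightarrow> length qs \<le> length ps"
    using ex_has_greatest_nat[of "path_in V E" "[v]" length] by blast
  then have "ps \<noteq> []"
    using \<open>path_in V E [v]\<close> by fastforce
  have neighbour_on_path: "\<exists>j. 0 < j \<and> j < length ps \<and> n = ps ! j"
    if edge: "{hd ps, n} \<in> E" for n
  proof -
    have "n \<noteq> hd ps" "n \<in> V"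
      using sg edge by (auto elim!: simple_graph_edgeE simp: doubleton_eq_iff)
    moreover have "n \<in> set ps"
    proof (rule ccontr)
      assume "n \<notin> set ps"
      then have "path_in V E (n # ps)"
        using ps edge \<open>n \<in> V\<close> \<open>ps \<noteq> []\<close> by (simp add: path_in_Cons insert_commute)
      then show False
        using longest by fastforce
    qed
    ultimately show ?thesis
      using \<open>ps \<noteq> []\<close> by (metis hd_conv_nth in_set_conv_nth neq0_conv)
  qed
  show thesis
  proof
    show "hd ps \<in> V"
      using ps \<open>ps \<noteq> []\<close> unfolding path_in_def by auto
    fix y z assume "{hd ps, y} \<in> E" "{hd ps, z} \<in> E"
    then obtain jy jz where "0 < jy" "jy < length ps" "y = ps ! jy"
      and "0 < jz" "jz < length ps" "z = ps ! jz"
      using neighbour_on_path by meson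
    moreover have "{ps ! 0, ps ! j} \<notin> E" if "2 \<le> j" "j < length ps" for j
      using forest_path_no_chord[OF forest ps that] .
    ultimately show "y = z"
      using \<open>{hd ps, y} \<in> E\<close> \<open>{hd ps, z} \<in> E\<close> \<open>ps \<noteq> []\<close>
      by (metis hd_conv_nth One_nat_def Suc_leI less_Suc_eq_0_disj nat_less_le numeral_2_eq_2)
  qed
qed

lemma bij_betw_exchange:
  assumes "bij_betw f A B" "t \<in> A" "l \<notin> A" "f l = f t"
  shows "bij_betw f (insert l (A - {t})) B"
  using assms unfolding bij_betw_def inj_on_def by (auto simp: image_iff)

lemma edges_at_mono: "S \<subseteq> S' \<Longrightarrow> edges_at E S \<subseteq> edges_at E S'"
  unfolding edges_at_def by blast

lemma edges_at_delete_vertex: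
  assumes "simple_graph V E" "l \<notin> S" "\<And>w. {l, w} \<in> E \<Longrightarrow> w \<notin> S"
  shows "edges_at E S = edges_at {e \<in> E. l \<notin> e} S"
proof -
  have "l \<notin> e" if "e \<in> E" "e \<inter> S \<noteq> {}" for e
  proof
    assume "l \<in> e"
    then obtain w where "e = {l, w}"
      using simple_graph_edge_through[OF assms(1) \<open>e \<in> E\<close>] by blast
    then show False
      using assms(2,3) that by blast
  qed
  then show ?thesis
    unfolding edges_at_def by blast
qed

lemma inj_on_edges_at_insert:
  assumes loc: "locally_injective \<phi> E"
    and inj: "inj_on (edge_map \<phi>) (edges_at {e \<in> E. l \<notin> e} S)"
    and separated: "\<And>f e. f \<in> E \<Longrightarrow> l \<in> f \<Longrightarrow> e \<in> E \<Longrightarrow> l \<notin> e \<Longrightarrow> e \<inter> S \<noteq> {} \<Longrightarrow>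
      edge_map \<phi> e \<noteq> edge_map \<phi> f"
  shows "inj_on (edge_map \<phi>) (edges_at E (insert l S))"
proof -
  let ?A = "{f \<in> E. l \<in> f}" and ?B = "edges_at {e \<in> E. l \<notin> e} S"
  have "inj_on (edge_map \<phi>) ?A"
    using loc unfolding locally_injective_def inj_on_def by blast
  moreover have "edge_map \<phi> ` (?A - ?B) \<inter> edge_map \<phi> ` (?B - ?A) = {}"
    using separated unfolding edges_at_def by fastforce
  moreover have "edges_at E (insert l S) \<subseteq> ?A \<union> ?B"
    unfolding edges_at_def by blast
  ultimately show ?thesis
    using inj by (meson inj_on_Un inj_on_subset)
qed

lemma inj_on_edges_at_insert_fresh:
  assumes sg: "simple_graph V E" and loc: "locally_injective \<phi> E"
    and inj: "inj_on (edge_map \<phi>) (edges_at {e \<in> E. l \<notin> e} S)"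
    and fresh: "\<phi> l \<notin> \<phi> ` (V - {l})"
  shows "inj_on (edge_map \<phi>) (edges_at E (insert l S))"
proof (rule inj_on_edges_at_insert[OF loc inj])
  fix f e assume "f \<in> E" "l \<in> f" "e \<in> E" "l \<notin> e"
  then have "\<phi> l \<notin> edge_map \<phi> e"
    using fresh simple_graph_edge_subset[OF sg] unfolding edge_map_def by blast
  then show "edge_map \<phi> e \<noteq> edge_map \<phi> f"
    using \<open>l \<in> f\<close> unfolding edge_map_def by blast
qed

lemma inj_on_edges_at_exchange:
  assumes sg: "simple_graph V E" and loc: "locally_injective \<phi> E"
    and leaf: "\<And>y z. {l, y} \<in> E \<Longrightarrow> {l, z} \<in> E \<Longrightarrow> y = z"
    and inj: "inj_on (edge_map \<phi>) (edges_at {e \<in> E. l \<notin> e} S)" and "inj_on \<phi> S"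
    and "t \<in> S" "\<phi> t = \<phi> l" and "{l, w} \<in> E" "w \<in> S"
  shows "inj_on (edge_map \<phi>) (edges_at E (insert l (S - {t})))"
proof (rule inj_on_edges_at_insert[OF loc inj_on_subset[OF inj edges_at_mono]])
  fix f e assume f: "f \<in> E" "l \<in> f" and e: "e \<in> E" "l \<notin> e" "e \<inter> (S - {t}) \<noteq> {}"
  then obtain s where s: "s \<in> e" "s \<in> S" "s \<noteq> t"
    by blast
  obtain y where "f = {l, y}"
    using simple_graph_edge_through[OF sg f] by blast
  then have "f = {l, w}"
    using leaf f(1) \<open>{l, w} \<in> E\<close> by blast
  show "edge_map \<phi> e \<noteq> edge_map \<phi> f"
  proof
    assume collide: "edge_map \<phi> e = edge_map \<phi> f"
    then have "e \<inter> f = {}"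
      using locally_injective_collision_disjoint[OF loc e(1) f(1)] f e by blast
    have "\<phi> s \<in> {\<phi> l, \<phi> w}"
      using collide s \<open>f = {l, w}\<close> unfolding edge_map_def by blast
    moreover have "\<phi> s \<noteq> \<phi> l" "\<phi> s \<noteq> \<phi> w"
      using inj_onD[OF \<open>inj_on \<phi> S\<close>, of s] s assms(6-9) \<open>e \<inter> f = {}\<close> \<open>f = {l, w}\<close>
      by auto
    ultimately show False
      by blast
  qed
qed blast

lemma transversal_extend_to_leaf:
  assumes sg: "simple_graph V E" and loc: "locally_injective \<phi> E"
    and "l \<in> V" and leaf: "\<And>y z. {l, y} \<in> E \<Longrightarrow> {l, z} \<in> E \<Longrightarrow> y = z"
    and sub: "S \<subseteq> V - {l}" and bij: "bij_betw \<phi> S (\<phi> ` (V - {l}))"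
    and inj: "inj_on (edge_map \<phi>) (edges_at {e \<in> E. l \<notin> e} S)"
  shows "\<exists>S' \<subseteq> V. bij_betw \<phi> S' (\<phi> ` V) \<and> inj_on (edge_map \<phi>) (edges_at E S')"
proof -
  have image_rest: "\<phi> ` (V - {l}) = \<phi> ` S" and "inj_on \<phi> S"
    using bij by (simp_all add: bij_betw_def)
  have image_all: "\<phi> ` V = insert (\<phi> l) (\<phi> ` S)"
    using image_rest \<open>l \<in> V\<close> by blast
  have "l \<notin> S"
    using sub by blast
  consider (fresh) "\<phi> l \<notin> \<phi> ` S"
    | (exchange) t w where "t \<in> S" "\<phi> t = \<phi> l" "{l, w} \<in> E" "w \<in> S"
    | (keep) "\<phi> l \<in> \<phi> ` S" "\<And>w. {l, w} \<in> E \<Longrightarrow> w \<notin> S"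
    by (metis imageE)
  then show ?thesis
  proof cases
    case fresh
    from notIn_Un_bij_betw[OF \<open>l \<notin> S\<close> fresh inj_on_imp_bij_betw[OF \<open>inj_on \<phi> S\<close>]]
    have "bij_betw \<phi> (insert l S) (\<phi> ` V)"
      using image_all by simp
    moreover have "inj_on (edge_map \<phi>) (edges_at E (insert l S))"
      using inj_on_edges_at_insert_fresh[OF sg loc inj] fresh image_rest by simp
    moreover have "insert l S \<subseteq> V"
      using sub \<open>l \<in> V\<close> by blast
    ultimately show ?thesis
      by blast
  next
    case exchange
    have "\<phi> l \<in> \<phi> ` S"
      using exchange(1,2) by (metis imageI)
    then have "\<phi> ` V = \<phi> ` (V - {l})"
      using image_all image_rest by (simp add: insert_absorb)
    then have "bij_betw \<phi> (insert l (S - {t})) (\<phi> ` V)"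
      using bij_betw_exchange[OF bij exchange(1) \<open>l \<notin> S\<close> exchange(2)[symmetric]] by simp
    moreover have "inj_on (edge_map \<phi>) (edges_at E (insert l (S - {t})))"
      using inj_on_edges_at_exchange[OF sg loc leaf inj \<open>inj_on \<phi> S\<close> exchange] .
    moreover have "insert l (S - {t}) \<subseteq> V"
      using sub \<open>l \<in> V\<close> by blast
    ultimately show ?thesis
      by blast
  next
    case keep
    then have "edges_at E S = edges_at {e \<in> E. l \<notin> e} S"
      using edges_at_delete_vertex[OF sg \<open>l \<notin> S\<close>] by blast
    moreover have "bij_betw \<phi> S (\<phi> ` V)"
      using \<open>inj_on \<phi> S\<close> keep(1) image_all by (simp add: bij_betw_def insert_absorb)
    moreover have "S \<subseteq> V"
      using sub by blast
    ultimately show ?thesis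
      using inj by (intro exI[of _ S]) simp
  qed
qed

lemma forest_transversal:
  assumes "forest V E" "locally_injective \<phi> E"
  shows "\<exists>S \<subseteq> V. bij_betw \<phi> S (\<phi> ` V) \<and> inj_on (edge_map \<phi>) (edges_at E S)"
proof -
  have "finite V"
    using assms(1) by (simp add: forest_def simple_graph_def)
  then show ?thesis
    using assms
  proof (induction V arbitrary: E rule: finite_psubset_induct)
    case (psubset V)
    note forest = psubset.prems(1) and loc = psubset.prems(2)
    show ?case
    proof (cases "V = {}")
      case True
      then show ?thesis
        by (intro exI[of _ "{}"]) (simp add: edges_at_def bij_betw_def)
    next
      case False
      then obtain l where "l \<in> V" and leaf: "\<And>y z. {l, y} \<in> E \<Longrightarrow> {l, z} \<in> E \<Longrightarrow> y = z"
        using forest_has_leaf[OF forest] by blast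
      have "V - {l} \<subset> V"
        using \<open>l \<in> V\<close> by blast
      moreover have "forest (V - {l}) {e \<in> E. l \<notin> e}"
        using forest_delete_vertex[OF forest] .
      moreover have "locally_injective \<phi> {e \<in> E. l \<notin> e}"
        by (rule locally_injective_subset[OF loc]) blast
      ultimately have "\<exists>S \<subseteq> V - {l}. bij_betw \<phi> S (\<phi> ` (V - {l})) \<and>
          inj_on (edge_map \<phi>) (edges_at {e \<in> E. l \<notin> e} S)"
        by (rule psubset.IH)
      then obtain S where S: "S \<subseteq> V - {l}" "bij_betw \<phi> S (\<phi> ` (V - {l}))"
        "inj_on (edge_map \<phi>) (edges_at {e \<in> E. l \<notin> e} S)"
        by blast
      have "simple_graph V E"
        using forest by (simp add: forest_def)
      from transversal_extend_to_leaf[OF this loc \<open>l \<in> V\<close> leaf S]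
      show ?thesis .
    qed
  qed
qed

theorem lemma5p1:
  fixes \<phi> :: "'a \<Rightarrow> 'b"
    and VT :: "'a set" and ET :: "'a set set"
    and VF :: "'b set" and EF :: "'b set set"
  assumes "forest VT ET"
    and "simple_graph VF EF"
    and "local_iso \<phi> VT ET VF EF"
  shows "\<exists>V \<subseteq> VT. bij_betw \<phi> V VF \<and> inj_on (edge_map \<phi>) (edges_at ET V)"
proof -
  have image: "\<phi> ` VT = VF" and loc: "locally_injective \<phi> ET"
    using assms(3) unfolding local_iso_def locally_injective_def by auto
  show ?thesis
    using forest_transversal[OF assms(1) loc] image by simp
qed

end
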